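(* Let $G$ be an undirected graph on $n$ vertices with double cover $H$, let $W$ be the lazy random walk matrix of $H$, and let $\sigma$ be the simplify operator. Then: (i) $\sigma\circ(c\cdot p)=c\cdot(\sigma\circ p)$ for all $p\in\mathbb{R}^{2n}_{\ge0}$ and $c\in\mathbb{R}_{\ge0}$; (ii) $\sigma\circ(a+b)\preceq\sigma\circ a+\sigma\circ b$ for all $a,b\in\mathbb{R}^{2n}_{\ge0}$; (iii) $\sigma\circ(pW)\preceq(\sigma\circ p)W$ for all $p\in\mathbb{R}^{2n}_{\ge0}$.
   Context: The double cover $H$ has vertices $v_1,v_2$ for each $v\in V_G$ and edges $\{u_1,v_2\},\{u_2,v_1\}$ for each $\{u,v\}\in E_G$. Vectors are row vectors indexed by $V_H$. $W=\frac12(I+D_H^{-1}A_H)$ with $D_H$ the degree matrix and $A_H$ the adjacency matrix of $H$. The simplify operator $\sigma:\mathbb{R}^{2n}_{\ge0}\to\mathbb{R}^{2n}_{\ge0}$ is $(\sigma\circ p)(u_1)=\max(0,p(u_1)-p(u_2))$, $(\sigma\circ p)(u_2)=\max(0,p(u_2)-p(u_1))$ for every $u\in V_G$. $x\preceq y$ means $x(v)\le y(v)$ for every coordinate $v$. *)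

theory Defs
  imports "HOL-Analysis.Analysis"
begin

text \<open>Double cover H: vertex set 'v \<times> bool, where (v,False) is v_1 and (v,True) is v_2.
  Vectors indexed by V_H are elements of real ^ ('v \<times> bool); row vector times
  matrix is v*.\<close>

definition dc_adj :: "('v \<Rightarrow> 'v \<Rightarrow> bool) \<Rightarrow> 'v \<times> bool \<Rightarrow> 'v \<times> bool \<Rightarrow> bool" where
  "dc_adj E x y \<longleftrightarrow> E (fst x) (fst y) \<and> snd x \<noteq> snd y"

definition dc_deg :: "('v \<Rightarrow> 'v \<Rightarrow> bool) \<Rightarrow> 'v \<times> bool \<Rightarrow> nat" where
  "dc_deg E x = card {y. dc_adj E x y}"

definition adj_matrix_H :: "('v::finite \<Rightarrow> 'v \<Rightarrow> bool) \<Rightarrow> real ^ ('v \<times> bool) ^ ('v \<times> bool)" where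
  "adj_matrix_H E = (\<chi> x y. if dc_adj E x y then 1 else 0)"

definition deg_matrix_H :: "('v::finite \<Rightarrow> 'v \<Rightarrow> bool) \<Rightarrow> real ^ ('v \<times> bool) ^ ('v \<times> bool)" where
  "deg_matrix_H E = (\<chi> x y. if x = y then real (dc_deg E x) else 0)"

definition diag_inv :: "real ^ 'n ^ 'n \<Rightarrow> real ^ 'n ^ 'n" where
  "diag_inv D = (\<chi> x y. if x = y then inverse (D $ x $ x) else 0)"

definition lazy_walk_H :: "('v::finite \<Rightarrow> 'v \<Rightarrow> bool) \<Rightarrow> real ^ ('v \<times> bool) ^ ('v \<times> bool)" where
  "lazy_walk_H E = (1/2) *\<^sub>R (mat 1 + diag_inv (deg_matrix_H E) ** adj_matrix_H E)"

definition simplify :: "real ^ ('v::finite \<times> bool) \<Rightarrow> real ^ ('v \<times> bool)" where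
  "simplify p = (\<chi> x. max 0 (p $ x - p $ (fst x, \<not> snd x)))"

definition nonneg_vec :: "real ^ 'n \<Rightarrow> bool" where
  "nonneg_vec p \<longleftrightarrow> (\<forall>i. 0 \<le> p $ i)"

definition vec_le :: "real ^ 'n \<Rightarrow> real ^ 'n \<Rightarrow> bool" (infix "\<preceq>" 50) where
  "x \<preceq> y \<longleftrightarrow> (\<forall>i. x $ i \<le> y $ i)"

end

theory Submission
  imports Defs
begin

(* The simplify operator makes a vector nonnegative while keeping its antisymmetric part
   d(x) = p(x) - p(x') exactly, where x' is the other copy of x: max(0, d) - max(0, -d) = d.
   The lazy walk W commutes with exchanging the two copies, so the antisymmetric part of pW
   depends only on that of p. Hence simplify (pW) = simplify ((simplify p) W), and this is
   dominated by (simplify p) W because that vector is nonnegative. *)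

definition dc_flip :: "'v \<times> bool \<Rightarrow> 'v \<times> bool" where
  "dc_flip x = (fst x, \<not> snd x)"

lemma dc_flip_dc_flip [simp]: "dc_flip (dc_flip x) = x"
  by (simp add: dc_flip_def)

lemma dc_flip_eq_iff [simp]: "dc_flip x = dc_flip y \<longleftrightarrow> x = y"
  by (metis dc_flip_dc_flip)

lemma bij_dc_flip: "bij dc_flip"
  by (rule o_bij[of dc_flip]) (auto simp: fun_eq_iff)

lemma dc_adj_flip: "dc_adj E (dc_flip x) (dc_flip y) = dc_adj E x y"
  by (auto simp: dc_adj_def dc_flip_def)

lemma dc_deg_flip: "dc_deg E (dc_flip x) = dc_deg E x"
proof -
  have "{y. dc_adj E (dc_flip x) y} = dc_flip ` {y. dc_adj E x y}"
    by (rule set_eqI) (metis dc_adj_flip dc_flip_dc_flip image_iff mem_Collect_eq)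
  moreover have "inj_on dc_flip {y. dc_adj E x y}"
    using bij_dc_flip bij_is_inj inj_on_subset by blast
  ultimately show ?thesis
    unfolding dc_deg_def by (simp add: card_image)
qed

lemma lazy_walk_H_nth:
  "lazy_walk_H E $ x $ y =
     (1/2) * ((if x = y then 1 else 0) + inverse (real (dc_deg E x)) * (if dc_adj E x y then 1 else 0))"
proof -
  have "(\<Sum>k\<in>UNIV. (if x = k then a else 0) * b k) = a * b x" for a :: real and b
    by (simp add: if_distrib[of "\<lambda>t. t * _"] cong: if_cong)
  then show ?thesis
    by (simp add: lazy_walk_H_def matrix_matrix_mult_def diag_inv_def deg_matrix_H_def
        adj_matrix_H_def mat_def)
qed

lemma lazy_walk_H_nonneg: "0 \<le> lazy_walk_H E $ x $ y"
  by (simp add: lazy_walk_H_nth)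

lemma lazy_walk_H_flip: "lazy_walk_H E $ dc_flip x $ dc_flip y = lazy_walk_H E $ x $ y"
  by (simp add: lazy_walk_H_nth dc_deg_flip dc_adj_flip)

lemma simplify_nth: "simplify p $ x = max 0 (p $ x - p $ dc_flip x)"
  by (simp add: simplify_def dc_flip_def)

lemma simplify_nonneg: "0 \<le> simplify p $ x"
  by (simp add: simplify_nth)

lemma simplify_antisym_part:
  "simplify p $ x - simplify p $ dc_flip x = p $ x - p $ dc_flip x"
  by (simp add: simplify_nth)

lemma simplify_eqI:
  assumes "\<And>x. p $ x - p $ dc_flip x = q $ x - q $ dc_flip x"
  shows "simplify p = simplify q"
  by (simp add: vec_eq_iff simplify_nth assms)

lemma simplify_le_self:
  assumes "nonneg_vec q"
  shows "simplify q \<preceq> q"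
proof -
  have "0 \<le> q $ x" "0 \<le> q $ dc_flip x" for x
    using assms unfolding nonneg_vec_def by blast+
  then show ?thesis
    by (simp add: vec_le_def simplify_nth)
qed

lemma simplify_scaleR:
  assumes "0 \<le> c"
  shows "simplify (c *\<^sub>R p) = c *\<^sub>R simplify p"
proof -
  have "max 0 (c * p $ x - c * p $ dc_flip x) = c * max 0 (p $ x - p $ dc_flip x)" for x
    using assms by (simp add: max_def right_diff_distrib mult_le_cancel_left)
  then show ?thesis
    by (simp add: vec_eq_iff simplify_nth)
qed

lemma simplify_add_le: "simplify (a + b) \<preceq> simplify a + simplify b"
  unfolding vec_le_def simplify_nth vector_add_component by (intro allI) linarith

lemma vector_matrix_mult_antisym_part:
  fixes M :: "real ^ ('v::finite \<times> bool) ^ ('v \<times> bool)"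
  assumes "\<And>x y. M $ dc_flip x $ dc_flip y = M $ x $ y"
  shows "(p v* M) $ y - (p v* M) $ dc_flip y = (\<Sum>x\<in>UNIV. M $ x $ y * (p $ x - p $ dc_flip x))"
proof -
  have "(p v* M) $ dc_flip y = (\<Sum>x\<in>UNIV. M $ dc_flip x $ dc_flip y * p $ dc_flip x)"
    unfolding vector_matrix_mult_def
    using sum.reindex_bij_betw[OF bij_dc_flip, of "\<lambda>x. M $ x $ dc_flip y * p $ x"]
    by (simp add: mult.commute)
  then show ?thesis
    by (simp add: assms vector_matrix_mult_def mult.commute right_diff_distrib sum_subtractf)
qed

lemma simplify_vector_matrix_mult_le:
  fixes M :: "real ^ ('v::finite \<times> bool) ^ ('v \<times> bool)"
  assumes flip_invariant: "\<And>x y. M $ dc_flip x $ dc_flip y = M $ x $ y"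
    and nonneg: "\<And>x y. 0 \<le> M $ x $ y"
  shows "simplify (p v* M) \<preceq> simplify p v* M"
proof -
  have "simplify (p v* M) = simplify (simplify p v* M)"
    by (rule simplify_eqI)
      (simp add: vector_matrix_mult_antisym_part[OF flip_invariant] simplify_antisym_part)
  moreover have "nonneg_vec (simplify p v* M)"
  proof -
    have "0 \<le> simplify p $ x * M $ x $ y" for x y
      by (simp add: simplify_nonneg nonneg)
    then show ?thesis
      by (simp add: nonneg_vec_def vector_matrix_mult_def sum_nonneg)
  qed
  ultimately show ?thesis
    by (simp add: simplify_le_self)
qed

theorem lemma3:
  fixes E :: "'v::finite \<Rightarrow> 'v \<Rightarrow> bool"
  assumes sym: "\<And>u v. E u v \<Longrightarrow> E v u"
    and irrefl: "\<And>u. \<not> E u u"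
  shows "(\<forall>(p :: real ^ ('v \<times> bool)) c. nonneg_vec p \<and> 0 \<le> c \<longrightarrow> simplify (c *\<^sub>R p) = c *\<^sub>R simplify p)
       \<and> (\<forall>(a :: real ^ ('v \<times> bool)) b. nonneg_vec a \<and> nonneg_vec b \<longrightarrow> simplify (a + b) \<preceq> simplify a + simplify b)
       \<and> (\<forall>p. nonneg_vec p \<longrightarrow> simplify (p v* lazy_walk_H E) \<preceq> simplify p v* lazy_walk_H E)"
  using simplify_scaleR simplify_add_le
    simplify_vector_matrix_mult_le[OF lazy_walk_H_flip lazy_walk_H_nonneg]
  by blast

end
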